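(* Assume $0<\theta_1\le\theta_2\le\dots\le\theta_N$, $m_i>0$, $\sigma>0$, $p>0$, and let $\mathbf y\in\mathbb R^N_+$ solve $$\sum_{k=1}^N m_k(y_k-y_i)+\sigma(\theta_i-y_i^p)y_i=0,\qquad i=1,\dots,N.$$ Then $\theta_1\le y_1^p\le y_2^p\le\dots\le y_N^p\le\theta_N$, and for every $i$, $$y_i^p\ge\theta_i+\frac{m_{\ge i}-M}{\sigma},\qquad m_{\ge i}=m_i+\dots+m_N,\ M=m_1+\dots+m_N.$$ Moreover, for $i\ne j$, $\theta_i=\theta_j$ if and only if $y_i=y_j$.
   Context: $\mathbb R^N_+$ denotes the set of vectors with all coordinates strictly positive. *)

theory Defs
  imports "HOL-Analysis.Analysis"
begin

end

theory Submission
  imports Defs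
begin

text \<open>Write \<open>S = \<Sum>\<^sub>k m\<^sub>k y\<^sub>k\<close> and \<open>M = \<Sum>\<^sub>k m\<^sub>k\<close>. The \<open>i\<close>-th equation
  is equivalent to \<open>\<sigma> \<theta>\<^sub>i = M + g(y\<^sub>i)\<close> with \<open>g(x) = \<sigma> x\<^sup>p - S / x\<close>,
  and \<open>g\<close> is strictly increasing on the positive reals. Hence \<open>\<theta>\<^sub>i\<close> is a strictly
  increasing function of \<open>y\<^sub>i\<close>, which yields the ordering of the \<open>y\<^sub>i\<close> and the
  equivalence \<open>\<theta>\<^sub>i = \<theta>\<^sub>j \<longleftrightarrow> y\<^sub>i = y\<^sub>j\<close>. The bounds come from the same identity:
  \<open>S \<ge> m\<^sub>\<ge>\<^sub>i y\<^sub>i\<close> because \<open>y\<^sub>i \<le> y\<^sub>k\<close> for \<open>k \<ge> i\<close>, and \<open>S \<le> M y\<^sub>N\<close>.\<close>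

lemma sum_mult_diff:
  "(\<Sum>k\<in>A. m k * (y k - x)) = (\<Sum>k\<in>A. m k * y k) - (\<Sum>k\<in>A. m k) * (x::real)"
  by (simp add: right_diff_distrib sum_subtractf sum_distrib_right)

lemma stationary_eq_iff_profile:
  fixes x t \<sigma> p :: real
  assumes "x > 0"
  shows "(\<Sum>k\<in>A. m k * (y k - x)) + \<sigma> * (t - x powr p) * x = 0 \<longleftrightarrow>
         \<sigma> * t = (\<Sum>k\<in>A. m k) + (\<sigma> * x powr p - (\<Sum>k\<in>A. m k * y k) / x)"
proof -
  have "(\<Sum>k\<in>A. m k * (y k - x)) + \<sigma> * (t - x powr p) * x
      = ((\<Sum>k\<in>A. m k) + (\<sigma> * x powr p - (\<Sum>k\<in>A. m k * y k) / x) - \<sigma> * t) * (- x)"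
    unfolding sum_mult_diff using assms by (simp add: field_simps)
  then show ?thesis
    using assms by (simp add: mult_eq_0_iff) argo
qed

lemma strict_mono_on_profile:
  fixes \<sigma> p S :: real
  assumes "\<sigma> > 0" "p > 0" "S \<ge> 0"
  shows "strict_mono_on {0<..} (\<lambda>x. \<sigma> * x powr p - S / x)"
proof (rule strict_mono_onI)
  fix x x' :: real
  assume "x \<in> {0<..}" "x < x'"
  then have "\<sigma> * x powr p < \<sigma> * x' powr p"
    using assms by (simp add: powr_less_mono2)
  moreover have "S / x' \<le> S / x"
    using \<open>x \<in> {0<..}\<close> \<open>x < x'\<close> assms by (simp add: divide_left_mono)
  ultimately show "\<sigma> * x powr p - S / x < \<sigma> * x' powr p - S / x'"
    by linarith
qed

locale stationary_system =
  fixes N :: nat and \<theta> m y :: "nat \<Rightarrow> real" and \<sigma> p :: real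
  assumes N: "N \<ge> 1"
    and theta_mono: "\<And>i. 1 \<le> i \<Longrightarrow> i < N \<Longrightarrow> \<theta> i \<le> \<theta> (Suc i)"
    and m_pos: "\<And>i. 1 \<le> i \<Longrightarrow> i \<le> N \<Longrightarrow> m i > 0"
    and sigma: "\<sigma> > 0" and p: "p > 0"
    and y_pos: "\<And>i. 1 \<le> i \<Longrightarrow> i \<le> N \<Longrightarrow> y i > 0"
    and eq: "\<And>i. 1 \<le> i \<Longrightarrow> i \<le> N \<Longrightarrow>
        (\<Sum>k=1..N. m k * (y k - y i)) + \<sigma> * (\<theta> i - y i powr p) * y i = 0"
begin

definition total_mass :: real where
  "total_mass = (\<Sum>k=1..N. m k)"

definition weighted_sum :: real where
  "weighted_sum = (\<Sum>k=1..N. m k * y k)"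

definition profile :: "real \<Rightarrow> real" where
  "profile x = \<sigma> * x powr p - weighted_sum / x"

lemma weighted_sum_pos: "weighted_sum > 0"
  unfolding weighted_sum_def using N m_pos y_pos by (intro sum_pos) auto

lemma theta_eq_profile:
  assumes "1 \<le> i" "i \<le> N"
  shows "\<sigma> * \<theta> i = total_mass + profile (y i)"
  using eq[OF assms] stationary_eq_iff_profile[OF y_pos[OF assms]]
  unfolding total_mass_def weighted_sum_def profile_def by blast

lemma theta_le:
  assumes "1 \<le> i" "i \<le> j" "j \<le> N"
  shows "\<theta> i \<le> \<theta> j"
proof (rule lift_Suc_mono_le_ivl[where N = "{1..<N}"])
  show "\<And>n. n \<in> {1..<N} \<Longrightarrow> \<theta> n \<le> \<theta> (Suc n)"
    using theta_mono by simp
qed (use assms in auto)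

lemma theta_less_if_y_less:
  assumes "y i < y j" "1 \<le> i" "i \<le> N" "1 \<le> j" "j \<le> N"
  shows "\<theta> i < \<theta> j"
proof -
  have "profile (y i) < profile (y j)"
    using strict_mono_on_profile[OF sigma p less_imp_le[OF weighted_sum_pos]]
      y_pos assms unfolding profile_def strict_mono_on_def by auto
  then have "\<sigma> * \<theta> i < \<sigma> * \<theta> j"
    using theta_eq_profile assms by simp
  then show ?thesis
    using sigma by simp
qed

lemma y_le_if_theta_le:
  assumes "\<theta> i \<le> \<theta> j" "1 \<le> i" "i \<le> N" "1 \<le> j" "j \<le> N"
  shows "y i \<le> y j"
  using theta_less_if_y_less[of j i] assms by force

lemma theta_eq_iff_y_eq:
  assumes "1 \<le> i" "i \<le> N" "1 \<le> j" "j \<le> N"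
  shows "\<theta> i = \<theta> j \<longleftrightarrow> y i = y j"
proof
  assume "\<theta> i = \<theta> j"
  then show "y i = y j"
    using y_le_if_theta_le assms by (metis order_antisym order_refl)
next
  assume "y i = y j"
  then have "\<sigma> * \<theta> i = \<sigma> * \<theta> j"
    using theta_eq_profile assms by simp
  then show "\<theta> i = \<theta> j"
    using sigma by simp
qed

lemma y_le:
  assumes "1 \<le> i" "i \<le> j" "j \<le> N"
  shows "y i \<le> y j"
  using assms by (intro y_le_if_theta_le theta_le) auto

lemma y_powr_le:
  assumes "1 \<le> i" "i \<le> j" "j \<le> N"
  shows "y i powr p \<le> y j powr p"
  using y_le[OF assms] y_pos[of i] assms p by (simp add: powr_mono2)

lemma y_powr_lower_bound:
  assumes "1 \<le> i" "i \<le> N"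
  shows "y i powr p \<ge> \<theta> i + ((\<Sum>k=i..N. m k) - total_mass) / \<sigma>"
proof -
  have "(\<Sum>k=i..N. m k) * y i = (\<Sum>k=i..N. m k * y i)"
    by (simp add: sum_distrib_right)
  also have "\<dots> \<le> (\<Sum>k=i..N. m k * y k)"
    using assms m_pos y_le by (intro sum_mono mult_left_mono) (auto intro: less_imp_le)
  also have "\<dots> \<le> weighted_sum"
    unfolding weighted_sum_def using assms m_pos y_pos
    by (intro sum_mono2) (auto intro: less_imp_le)
  finally have "(\<Sum>k=i..N. m k) \<le> weighted_sum / y i"
    using y_pos[OF assms] by (simp add: pos_le_divide_eq)
  then have "\<sigma> * \<theta> i \<le> total_mass + \<sigma> * y i powr p - (\<Sum>k=i..N. m k)"
    using theta_eq_profile[OF assms] unfolding profile_def by linarith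
  then show ?thesis
    using sigma by (simp add: field_simps)
qed

lemma y_powr_last_le_theta: "y N powr p \<le> \<theta> N"
proof -
  have "weighted_sum \<le> (\<Sum>k=1..N. m k * y N)"
    unfolding weighted_sum_def using m_pos y_le
    by (intro sum_mono mult_left_mono) (auto intro: less_imp_le)
  also have "\<dots> = total_mass * y N"
    unfolding total_mass_def by (simp add: sum_distrib_right)
  finally have "weighted_sum / y N \<le> total_mass"
    using y_pos[of N] N by (simp add: pos_divide_le_eq)
  then have "\<sigma> * y N powr p \<le> \<sigma> * \<theta> N"
    using theta_eq_profile[of N] N unfolding profile_def by linarith
  then show ?thesis
    using sigma by simp
qed

end

theorem lemma5p2:
  fixes N :: nat and \<theta> m y :: "nat \<Rightarrow> real" and \<sigma> p :: real
  assumes N: "N \<ge> 1"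
    and theta_pos: "\<theta> 1 > 0"
    and theta_mono: "\<And>i. 1 \<le> i \<Longrightarrow> i < N \<Longrightarrow> \<theta> i \<le> \<theta> (Suc i)"
    and m_pos: "\<And>i. 1 \<le> i \<Longrightarrow> i \<le> N \<Longrightarrow> m i > 0"
    and sigma: "\<sigma> > 0" and p: "p > 0"
    and y_pos: "\<And>i. 1 \<le> i \<Longrightarrow> i \<le> N \<Longrightarrow> y i > 0"
    and eq: "\<And>i. 1 \<le> i \<Longrightarrow> i \<le> N \<Longrightarrow>
        (\<Sum>k=1..N. m k * (y k - y i)) + \<sigma> * (\<theta> i - y i powr p) * y i = 0"
  shows "\<theta> 1 \<le> y 1 powr p
       \<and> (\<forall>i. 1 \<le> i \<and> i < N \<longrightarrow> y i powr p \<le> y (Suc i) powr p)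
       \<and> y N powr p \<le> \<theta> N
       \<and> (\<forall>i. 1 \<le> i \<and> i \<le> N \<longrightarrow>
            y i powr p \<ge> \<theta> i + ((\<Sum>k=i..N. m k) - (\<Sum>k=1..N. m k)) / \<sigma>)
       \<and> (\<forall>i j. 1 \<le> i \<and> i \<le> N \<and> 1 \<le> j \<and> j \<le> N \<and> i \<noteq> j \<longrightarrow>
            (\<theta> i = \<theta> j \<longleftrightarrow> y i = y j))"
proof -
  interpret stationary_system N \<theta> m y \<sigma> p
    using assms by unfold_locales auto
  have lower: "y i powr p \<ge> \<theta> i + ((\<Sum>k=i..N. m k) - (\<Sum>k=1..N. m k)) / \<sigma>"
    if "1 \<le> i" "i \<le> N" for i
    using y_powr_lower_bound[OF that] unfolding total_mass_def .
  have "\<theta> 1 \<le> y 1 powr p"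
    using lower[of 1] N by simp
  then show ?thesis
    using lower y_powr_le y_powr_last_le_theta theta_eq_iff_y_eq by auto
qed

end
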